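(* Let $G$ be a finite simple connected graph on $n$ vertices and $w:E(G)\to\mathbb{R}_{>0}$ a positive edge-weighting. For each edge $e$ define $C_w(e)$ as the maximum of $w(C)=\sum_{f\in E(C)}w(f)$ over all cycles $C\subseteq G$ containing $e$ if $e$ lies on a cycle, and $C_w(e)=2w(e)$ if $e$ is a bridge. Let $F=\{e\in E(G): C_w(e)<2w(e)\}$. Then the edge set $F$ contains no cycle; in particular $|F|\le n-1$.
   Context: A bridge is an edge lying on no cycle. *)

theory Defs
  imports Complex_Main
begin

definition simple_graph :: "'a set \<Rightarrow> 'a set set \<Rightarrow> bool" where
  "simple_graph V E \<longleftrightarrow> finite V \<and> (\<forall>e\<in>E. \<exists>u v. e = {u, v} \<and> u \<in> V \<and> v \<in> V \<and> u \<noteq> v)"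

definition adj :: "'a set set \<Rightarrow> 'a \<Rightarrow> 'a \<Rightarrow> bool" where
  "adj E u v \<longleftrightarrow> {u, v} \<in> E"

definition connected_graph :: "'a set \<Rightarrow> 'a set set \<Rightarrow> bool" where
  "connected_graph V E \<longleftrightarrow> (\<forall>u\<in>V. \<forall>v\<in>V. (u, v) \<in> {(x, y). adj E x y}\<^sup>*)"

definition cycle_edges :: "'a list \<Rightarrow> 'a set set" where
  "cycle_edges xs = {{xs ! i, xs ! ((i + 1) mod length xs)} | i. i < length xs}"

definition is_cycle :: "'a set set \<Rightarrow> 'a list \<Rightarrow> bool" where
  "is_cycle E xs \<longleftrightarrow> length xs \<ge> 3 \<and> distinct xs \<and> cycle_edges xs \<subseteq> E"

definition Cw :: "'a set set \<Rightarrow> ('a set \<Rightarrow> real) \<Rightarrow> 'a set \<Rightarrow> real" where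
  "Cw E w e = (if \<exists>xs. is_cycle E xs \<and> e \<in> cycle_edges xs
     then Max {sum w (cycle_edges xs) | xs. is_cycle E xs \<and> e \<in> cycle_edges xs}
     else 2 * w e)"

end

theory Submission
  imports Defs
begin

text \<open>
  On a cycle \<open>C\<close> with at least two edges some edge \<open>e\<close> carries at most half of \<open>w(C)\<close>,
  i.e. \<open>2 w(e) \<le> w(C) \<le> C\<^sub>w(e)\<close>, so \<open>e \<notin> F\<close>. Hence \<open>F\<close> is a forest, and a forest
  on \<open>n\<close> vertices has at most \<open>n - 1\<close> edges: removing a leaf together with its edge
  reduces both counts by one.
\<close>

lemma ex_twice_le_sum:
  fixes f :: "'a \<Rightarrow> 'b::linordered_idom"
  assumes "finite A" and "2 \<le> card A" and "\<forall>x\<in>A. 0 \<le> f x"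
  shows "\<exists>x\<in>A. 2 * f x \<le> sum f A"
proof (rule ccontr)
  assume "\<not> ?thesis"
  then have "\<forall>x\<in>A. sum f A < 2 * f x" by auto
  moreover have "A \<noteq> {}" using assms(2) by auto
  ultimately have "(\<Sum>x\<in>A. sum f A) < (\<Sum>x\<in>A. 2 * f x)"
    using assms(1) by (intro sum_strict_mono) auto
  then have "of_nat (card A) * sum f A < 2 * sum f A" by (simp add: sum_distrib_left)
  moreover have "2 * sum f A \<le> of_nat (card A) * sum f A"
    using assms by (intro mult_right_mono sum_nonneg) auto
  ultimately show False by simp
qed

definition is_path :: "'a set set \<Rightarrow> 'a list \<Rightarrow> bool" where
  "is_path F p \<longleftrightarrow> distinct p \<and> (\<forall>i. Suc i < length p \<longrightarrow> {p ! i, p ! Suc i} \<in> F)"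

lemma is_path_Cons_Cons:
  "is_path F (z # y # p) \<longleftrightarrow> z \<notin> set (y # p) \<and> {z, y} \<in> F \<and> is_path F (y # p)"
  unfolding is_path_def by (auto simp: nth_Cons split: nat.splits)

lemma is_path_take: "is_path F p \<Longrightarrow> is_path F (take n p)"
  unfolding is_path_def by auto

lemma is_cycle_closed_path:
  assumes "is_path F p" and "3 \<le> length p" and "{last p, hd p} \<in> F"
  shows "is_cycle F p"
proof -
  have "{p ! i, p ! ((i + 1) mod length p)} \<in> F" if "i < length p" for i
  proof (cases "Suc i < length p")
    case True
    then show ?thesis using assms(1) by (simp add: is_path_def)
  next
    case False
    then have "i = length p - 1" using that by simp
    moreover have "p \<noteq> []" using assms(2) by auto
    ultimately show ?thesis using assms(3) by (simp add: last_conv_nth hd_conv_nth insert_commute)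
  qed
  then show ?thesis using assms(1,2) by (auto simp: is_cycle_def cycle_edges_def is_path_def)
qed

lemma is_cycle_mono: "is_cycle F xs \<Longrightarrow> F \<subseteq> G \<Longrightarrow> is_cycle G xs"
  unfolding is_cycle_def by auto

lemma simple_graph_subset: "simple_graph V E \<Longrightarrow> F \<subseteq> E \<Longrightarrow> simple_graph V F"
  unfolding simple_graph_def by blast

lemma simple_graph_finite_edges:
  assumes "simple_graph V E"
  shows "finite E"
proof (rule finite_subset)
  show "E \<subseteq> Pow V" using assms by (auto simp: simple_graph_def)
  show "finite (Pow V)" using assms by (simp add: simple_graph_def)
qed

lemma simple_graph_edge_subset: "simple_graph V E \<Longrightarrow> e \<in> E \<Longrightarrow> e \<subseteq> V"
  unfolding simple_graph_def by fastforce

lemma simple_graph_delete_vertex: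
  assumes "simple_graph V E" and "\<forall>e\<in>E. x \<notin> e"
  shows "simple_graph (V - {x}) E"
  unfolding simple_graph_def
proof (intro conjI ballI)
  show "finite (V - {x})" using assms(1) by (simp add: simple_graph_def)
next
  fix e assume "e \<in> E"
  then obtain u v where "e = {u, v}" "u \<in> V" "v \<in> V" "u \<noteq> v"
    using assms(1) unfolding simple_graph_def by blast
  moreover have "x \<notin> e" using assms(2) \<open>e \<in> E\<close> by blast
  ultimately show "\<exists>u v. e = {u, v} \<and> u \<in> V - {x} \<and> v \<in> V - {x} \<and> u \<noteq> v" by blast
qed

lemma simple_graph_edge_through:
  assumes "simple_graph V E" and "e \<in> E" and "x \<in> e"
  obtains z where "e = {x, z}" and "z \<noteq> x" and "x \<in> V" and "z \<in> V"
  using assms unfolding simple_graph_def by (metis doubleton_eq_iff insertE singletonD)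

lemma simple_graph_cycle_vertices:
  assumes "simple_graph V E" and "is_cycle E xs"
  shows "set xs \<subseteq> V"
proof
  fix v assume "v \<in> set xs"
  then obtain i where i: "i < length xs" "xs ! i = v" by (auto simp: in_set_conv_nth)
  then have "{v, xs ! ((i + 1) mod length xs)} \<in> E"
    using assms(2) unfolding is_cycle_def cycle_edges_def by blast
  then show "v \<in> V" using simple_graph_edge_subset[OF assms(1)] by blast
qed

lemma finite_cycle_edges: "finite (cycle_edges xs)"
  by (simp add: cycle_edges_def)

lemma two_le_card_cycle_edges:
  assumes "is_cycle E xs"
  shows "2 \<le> card (cycle_edges xs)"
proof -
  have len: "3 \<le> length xs" and dist: "distinct xs" using assms by (auto simp: is_cycle_def)
  have "{xs ! 0, xs ! 1} \<in> cycle_edges xs" "{xs ! 1, xs ! 2} \<in> cycle_edges xs"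
    using len unfolding cycle_edges_def by (force simp: numeral_2_eq_2)+
  moreover have "xs ! 0 \<noteq> xs ! 2" and "xs ! 1 \<noteq> xs ! 2"
    using len dist by (force simp: distinct_conv_nth)+
  then have "{xs ! 0, xs ! 1} \<noteq> {xs ! 1, xs ! 2}" by (auto simp: doubleton_eq_iff)
  ultimately show ?thesis by (metis card_2_iff card_mono empty_subsetI finite_cycle_edges insert_subset)
qed

lemma cycle_weight_le_Cw:
  assumes "simple_graph V E" and "is_cycle E xs" and "e \<in> cycle_edges xs"
  shows "sum w (cycle_edges xs) \<le> Cw E w e"
proof -
  let ?W = "{sum w (cycle_edges ys) | ys. is_cycle E ys \<and> e \<in> cycle_edges ys}"
  have "?W \<subseteq> (\<lambda>ys. sum w (cycle_edges ys)) ` {ys. set ys \<subseteq> V \<and> distinct ys}"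
    using assms(1) simple_graph_cycle_vertices by (fastforce simp: is_cycle_def)
  moreover have "finite V" using assms(1) by (simp add: simple_graph_def)
  ultimately have "finite ?W" using finite_subset finite_imageI finite_subset_distinct by blast
  then show ?thesis using assms(2,3) by (auto simp: Cw_def intro: Max_ge)
qed

lemma acyclic_has_leaf:
  assumes G: "simple_graph V F" and "F \<noteq> {}" and acyclic: "\<nexists>xs. is_cycle F xs"
  obtains x y where "{x, y} \<in> F" and "x \<noteq> y" and "\<And>e. e \<in> F \<Longrightarrow> x \<in> e \<Longrightarrow> e = {x, y}"
proof -
  \<comment> \<open>The first vertex of a longest path is a leaf: any other neighbour
    would extend the path or close a cycle.\<close>
  define long_path where "long_path p \<longleftrightarrow> is_path F p \<and> set p \<subseteq> V \<and> 2 \<le> length p" for p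
  obtain e0 where "e0 \<in> F" using \<open>F \<noteq> {}\<close> by blast
  then obtain u v where "e0 = {u, v}" "u \<noteq> v" "u \<in> V" "v \<in> V"
    using G unfolding simple_graph_def by blast
  then have "long_path [u, v]" using \<open>e0 \<in> F\<close> by (auto simp: long_path_def is_path_def)
  moreover have "\<forall>p. long_path p \<longrightarrow> length p < Suc (card V)"
  proof (intro allI impI)
    fix p assume "long_path p"
    then have "length p = card (set p)" and "set p \<subseteq> V"
      by (simp_all add: long_path_def is_path_def distinct_card)
    then show "length p < Suc (card V)" using G card_mono[of V "set p"] by (simp add: simple_graph_def)
  qed
  ultimately obtain p where "long_path p" and longest: "\<And>q. long_path q \<Longrightarrow> length q \<le> length p"
    using Lattices_Big.ex_has_greatest_nat[of long_path "[u, v]" length] by blast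
  then obtain x y q where p: "p = x # y # q"
    unfolding long_path_def by (metis Suc_le_length_iff numeral_2_eq_2)
  have "{x, y} \<in> F" and "x \<noteq> y" using \<open>long_path p\<close> by (auto simp: p long_path_def is_path_Cons_Cons)
  moreover have "e = {x, y}" if e: "e \<in> F" "x \<in> e" for e
  proof -
    obtain z where z: "e = {x, z}" "z \<noteq> x" "x \<in> V" "z \<in> V"
      by (rule simple_graph_edge_through[OF G e])
    consider "z \<notin> set p" | "z = y" | "z \<in> set q" using p z by auto
    then show ?thesis
    proof cases
      case 1
      then have "long_path (z # p)"
        using \<open>long_path p\<close> \<open>e \<in> F\<close> z by (auto simp: long_path_def p is_path_Cons_Cons insert_commute)
      then show ?thesis using longest[of "z # p"] by simp
    next
      case 2
      then show ?thesis using z by simp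
    next
      case 3
      then obtain i where i: "i < length q" "q ! i = z" by (auto simp: in_set_conv_nth)
      have "is_cycle F (take (i + 3) p)"
      proof (rule is_cycle_closed_path)
        show "is_path F (take (i + 3) p)" using \<open>long_path p\<close> is_path_take long_path_def by blast
        show "3 \<le> length (take (i + 3) p)" using i by (simp add: p)
        show "{last (take (i + 3) p), hd (take (i + 3) p)} \<in> F"
          using i z \<open>e \<in> F\<close> by (simp add: p last_conv_nth insert_commute)
      qed
      then show ?thesis using acyclic by blast
    qed
  qed
  ultimately show ?thesis using that by blast
qed

lemma acyclic_card_edges_le:
  "simple_graph V F \<Longrightarrow> \<nexists>xs. is_cycle F xs \<Longrightarrow> card F \<le> card V - 1"
proof (induction "card V" arbitrary: V F rule: less_induct)
  case less
  show ?case
  proof (cases "F = {}")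
    case True
    then show ?thesis by simp
  next
    case False
    obtain x y where xy: "{x, y} \<in> F" "x \<noteq> y" and leaf: "\<And>e. e \<in> F \<Longrightarrow> x \<in> e \<Longrightarrow> e = {x, y}"
      using acyclic_has_leaf[OF less.prems(1) False less.prems(2)] by blast
    have finV: "finite V" using less.prems(1) by (simp add: simple_graph_def)
    have xV: "x \<in> V" and yV: "y \<in> V" using simple_graph_edge_subset[OF less.prems(1) xy(1)] by simp_all
    have "\<forall>e\<in>F - {{x, y}}. x \<notin> e" using leaf by blast
    then have "simple_graph (V - {x}) (F - {{x, y}})"
      by (rule simple_graph_delete_vertex[OF simple_graph_subset[OF less.prems(1) Diff_subset]])
    moreover have "\<nexists>xs. is_cycle (F - {{x, y}}) xs" using less.prems(2) by (meson Diff_subset is_cycle_mono)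
    moreover have "card (V - {x}) < card V" using finV xV by (rule card_Diff1_less)
    ultimately have "card (F - {{x, y}}) \<le> card (V - {x}) - 1" by (rule less.hyps[rotated])
    moreover have "card F = card (F - {{x, y}}) + 1"
      using card_Suc_Diff1[OF simple_graph_finite_edges[OF less.prems(1)] xy(1)] by simp
    moreover have "2 \<le> card V" using card_mono[OF finV, of "{x, y}"] xV yV xy(2) by simp
    ultimately show ?thesis using finV xV by simp
  qed
qed

theorem corollary4p3:
  fixes V :: "'a set" and E :: "'a set set" and w :: "'a set \<Rightarrow> real"
  assumes "simple_graph V E"
    and "connected_graph V E"
    and "\<forall>e\<in>E. w e > 0"
  defines "F \<equiv> {e \<in> E. Cw E w e < 2 * w e}"
  shows "(\<nexists>xs. is_cycle F xs) \<and> card F \<le> card V - 1"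
proof -
  have FE: "F \<subseteq> E" by (simp add: F_def)
  have acyclic: "\<nexists>xs. is_cycle F xs"
  proof
    assume "\<exists>xs. is_cycle F xs"
    then obtain xs where cyc: "is_cycle F xs" by blast
    have CF: "cycle_edges xs \<subseteq> F" using cyc by (simp add: is_cycle_def)
    then have "\<forall>e\<in>cycle_edges xs. 0 \<le> w e" using FE assms(3) by force
    then obtain e where e: "e \<in> cycle_edges xs" and light: "2 * w e \<le> sum w (cycle_edges xs)"
      using ex_twice_le_sum finite_cycle_edges two_le_card_cycle_edges[OF cyc] by blast
    have "sum w (cycle_edges xs) \<le> Cw E w e"
      using cycle_weight_le_Cw[OF assms(1) is_cycle_mono[OF cyc FE] e] .
    moreover have "Cw E w e < 2 * w e" using CF e by (auto simp: F_def)
    ultimately show False using light by simp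
  qed
  moreover have "simple_graph V F" using simple_graph_subset[OF assms(1) FE] .
  ultimately show ?thesis using acyclic_card_edges_le by blast
qed

end
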